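(* Let $T:X\rightrightarrows X^*$ be a pre-maximal pseudomonotone operator. Then $T$ is $D$-maximal pseudomonotone if and only if $\widehat{T}=T^\rho_D$.
   Context: $X$ is a real Banach space with dual $X^*$ and pairing $\langle x,x^*\rangle=x^*(x)$. A multivalued operator $T:X\rightrightarrows X^*$ is identified with its graph $T\subset X\times X^*$; $T(x)=\{x^*:(x,x^* )\in T\}$, $\mathrm{dom}(T)=\{x:T(x)\ne\emptyset\}$, $Z_T=\{x:0\in T(x)\}$. For $A\subset X^*$, $\operatorname{cone}(A)=\{tv:t\ge0,v\in A\}$ and $\operatorname{cone}_\circ(A)=\{tv:t>0,v\in A\}$. For $C\subset X$, $N_C(x)=\{x^*: \langle y-x,x^*\rangle\le0\ \forall y\in C\}$. For $(x,x^* ),(y,y^* )\in X\times X^*$, write $(x,x^* )\sim_p(y,y^* )$ if either $\min\{\langle x-y,y^*\rangle,\langle y-x,x^*\rangle\}<0$ or $\langle x-y,y^*\rangle=\langle y-x,x^*\rangle=0$. The pseudomonotone polar is $T^\rho=\{(x,x^* ): (x,x^* )\sim_p(y,y^* )\ \forall (y,y^* )\in T\}$, and $T^\rho_D$ denotes its restriction to $\mathrm{dom}(T)$. $T$ is pseudomonotone if for all $(x,x^* ),(y,y^* )\in T$, $\langle y-x,x^*\rangle\ge0$ implies $\langle y-x,y^*\rangle\ge0$; $T$ is pre-maximal pseudomonotone if both $T$ and $T^\rho$ are pseudomonotone. Two operators $T,S$ are equivalent if $\mathrm{dom}(T)=\mathrm{dom}(S)$, $Z_T=Z_S$ and $\operatorname{cone}(T(x))=\operatorname{cone}(S(x))$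 for all $x\in\mathrm{dom}(T)\setminus Z_T$. $T$ is $D$-maximal pseudomonotone if $T$ is pseudomonotone and there is a pseudomonotone operator $S$ equivalent to $T$ which has no proper pseudomonotone extension with the same domain. For $x\in Z_T$, $L(T,x)=\{y\in X:\exists y^*\in T(y),\ \langle x-y,y^*\rangle\ge0\}$, and $\widehat T(x)=N_{L(T,x)}(x)$ if $x\in Z_T$, $\widehat T(x)=\operatorname{cone}_\circ(T(x))$ if $x\in\mathrm{dom}(T)\setminus Z_T$, $\widehat T(x)=\emptyset$ if $x\notin\mathrm{dom}(T)$. *)

theory Defs
  imports "HOL-Analysis.Analysis"
begin

text \<open>X is a real Banach space 'a::banach; its dual X* is the space of bounded
linear functionals (blinfun). The pairing is blinfun_apply.
A multivalued operator is identified with its graph.\<close>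

type_synonym 'a mop = "('a \<times> ('a \<Rightarrow>\<^sub>L real)) set"

definition opval :: "('a::real_normed_vector) mop \<Rightarrow> 'a \<Rightarrow> ('a \<Rightarrow>\<^sub>L real) set" where
  "opval T x = {xs. (x, xs) \<in> T}"

definition opdom :: "('a::real_normed_vector) mop \<Rightarrow> 'a set" where
  "opdom T = {x. opval T x \<noteq> {}}"

definition zeros :: "('a::real_normed_vector) mop \<Rightarrow> 'a set" where
  "zeros T = {x. 0 \<in> opval T x}"

definition dcone :: "('a::real_vector) set \<Rightarrow> 'a set" where
  "dcone A = {t *\<^sub>R v | t v. t \<ge> 0 \<and> v \<in> A}"

definition dcone_pos :: "('a::real_vector) set \<Rightarrow> 'a set" where
  "dcone_pos A = {t *\<^sub>R v | t v. t > 0 \<and> v \<in> A}"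

definition normal_cone :: "('a::real_normed_vector) set \<Rightarrow> 'a \<Rightarrow> ('a \<Rightarrow>\<^sub>L real) set" where
  "normal_cone C x = {xs. \<forall>y\<in>C. blinfun_apply xs (y - x) \<le> 0}"

definition psim :: "('a::real_normed_vector) \<times> ('a \<Rightarrow>\<^sub>L real) \<Rightarrow> 'a \<times> ('a \<Rightarrow>\<^sub>L real) \<Rightarrow> bool" where
  "psim p q = (let (x, xs) = p; (y, ys) = q in
     min (blinfun_apply ys (x - y)) (blinfun_apply xs (y - x)) < 0 \<or>
     (blinfun_apply ys (x - y) = 0 \<and> blinfun_apply xs (y - x) = 0))"

definition pm_polar :: "('a::real_normed_vector) mop \<Rightarrow> 'a mop" where
  "pm_polar T = {p. \<forall>q\<in>T. psim p q}"

definition pm_polar_D :: "('a::real_normed_vector) mop \<Rightarrow> 'a mop" where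
  "pm_polar_D T = {(x, xs). (x, xs) \<in> pm_polar T \<and> x \<in> opdom T}"

definition pseudomonotone :: "('a::real_normed_vector) mop \<Rightarrow> bool" where
  "pseudomonotone T \<longleftrightarrow> (\<forall>x xs y ys. (x, xs) \<in> T \<longrightarrow> (y, ys) \<in> T \<longrightarrow>
      blinfun_apply xs (y - x) \<ge> 0 \<longrightarrow> blinfun_apply ys (y - x) \<ge> 0)"

definition pre_maximal_pm :: "('a::real_normed_vector) mop \<Rightarrow> bool" where
  "pre_maximal_pm T \<longleftrightarrow> pseudomonotone T \<and> pseudomonotone (pm_polar T)"

definition op_equiv :: "('a::real_normed_vector) mop \<Rightarrow> 'a mop \<Rightarrow> bool" where
  "op_equiv T S \<longleftrightarrow> opdom T = opdom S \<and> zeros T = zeros S \<and>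
     (\<forall>x \<in> opdom T - zeros T. dcone (opval T x) = dcone (opval S x))"

definition D_maximal_pm :: "('a::real_normed_vector) mop \<Rightarrow> bool" where
  "D_maximal_pm T \<longleftrightarrow> pseudomonotone T \<and>
     (\<exists>S. pseudomonotone S \<and> op_equiv T S \<and>
        \<not> (\<exists>S'. pseudomonotone S' \<and> S \<subset> S' \<and> opdom S' = opdom S))"

definition Lset :: "('a::real_normed_vector) mop \<Rightarrow> 'a \<Rightarrow> 'a set" where
  "Lset T x = {y. \<exists>ys \<in> opval T y. blinfun_apply ys (x - y) \<ge> 0}"

definition That :: "('a::real_normed_vector) mop \<Rightarrow> 'a mop" where
  "That T = {(x, xs).
     (x \<in> zeros T \<and> xs \<in> normal_cone (Lset T x) x) \<or>
     (x \<in> opdom T - zeros T \<and> xs \<in> dcone_pos (opval T x))}"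

end

theory Submission
  imports Defs
begin

text \<open>A pseudomonotone \<open>S\<close> has no proper pseudomonotone extension with the same domain
exactly when \<open>S\<^sup>\<rho>\<^sub>D = S\<close>: any pair of \<open>S\<^sup>\<rho>\<^sub>D\<close> can be added to \<open>S\<close> without destroying
pseudomonotonicity. If such an \<open>S\<close> is equivalent to \<open>T\<close>, then \<open>S \<subseteq> T\<^sup>\<rho>\<close> (off the zeros the
values of \<open>S\<close> and \<open>T\<close> span the same cones, at common zeros pseudomonotonicity suffices), and
pseudomonotonicity of \<open>T\<^sup>\<rho>\<close> then forces \<open>S = T\<^sup>\<rho>\<^sub>D\<close>. At a zero \<open>x\<close> of \<open>T\<close>, membership in
\<open>T\<^sup>\<rho>\<^sub>D\<close> is exactly membership in the normal cone to \<open>L(T,x)\<close>, and elsewhere the values of \<open>S\<close>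
generate the positive cones over \<open>T(x)\<close>; so \<open>T\<^sup>\<rho>\<^sub>D\<close> coincides with \<open>That T\<close>. Conversely,
\<open>That T\<close> is always equivalent to \<open>T\<close>, and for pre-maximal \<open>T\<close> the operator \<open>T\<^sup>\<rho>\<^sub>D\<close> is its
own restricted polar, so \<open>That T = T\<^sup>\<rho>\<^sub>D\<close> is a witness of D-maximality.\<close>

lemma mem_opval [simp]: "xs \<in> opval T x \<longleftrightarrow> (x, xs) \<in> T"
  unfolding opval_def by simp

lemma mem_opdom: "x \<in> opdom T \<longleftrightarrow> (\<exists>xs. (x, xs) \<in> T)"
  unfolding opdom_def by auto

lemma mem_zeros: "x \<in> zeros T \<longleftrightarrow> (x, 0) \<in> T"
  unfolding zeros_def by simp

lemma zeros_subset_opdom: "zeros T \<subseteq> opdom T"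
  by (auto simp: mem_zeros mem_opdom)

lemma mem_dcone_pos: "xs \<in> dcone_pos A \<longleftrightarrow> (\<exists>t v. t > 0 \<and> v \<in> A \<and> xs = t *\<^sub>R v)"
  unfolding dcone_pos_def by auto

lemma mem_dcone_pos_self: "v \<in> A \<Longrightarrow> v \<in> dcone_pos A"
  unfolding mem_dcone_pos by (intro exI[of _ 1]) auto

lemma dcone_pos_eq_dcone_minus_zero: "0 \<notin> A \<Longrightarrow> dcone_pos A = dcone A - {0}"
  unfolding dcone_pos_def dcone_def by (auto; force simp: less_le)

lemma dcone_dcone_pos: "dcone (dcone_pos A) = dcone A"
proof (intro set_eqI iffI)
  fix w assume "w \<in> dcone (dcone_pos A)"
  then obtain s t v where "s \<ge> 0" "t > 0" "v \<in> A" "w = (s * t) *\<^sub>R v"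
    unfolding dcone_def dcone_pos_def by auto
  then show "w \<in> dcone A" unfolding dcone_def by fastforce
next
  fix w assume "w \<in> dcone A"
  then obtain t v where "t \<ge> 0" "v \<in> A" "w = t *\<^sub>R v" unfolding dcone_def by auto
  then show "w \<in> dcone (dcone_pos A)" unfolding dcone_def using mem_dcone_pos_self by blast
qed

lemma psim_iff: "psim (x, xs) (y, ys) \<longleftrightarrow>
   ys (x - y) < 0 \<or> xs (y - x) < 0 \<or> (ys (x - y) = 0 \<and> xs (y - x) = 0)"
  unfolding psim_def by (auto simp: min_def)

lemma psim_iff_pseudomonotone_pair: "psim (x, xs) (y, ys) \<longleftrightarrow>
   (xs (y - x) \<ge> 0 \<longrightarrow> ys (y - x) \<ge> 0) \<and> (ys (x - y) \<ge> 0 \<longrightarrow> xs (x - y) \<ge> 0)"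
  unfolding psim_iff by (auto simp: blinfun.diff_right)

lemma psim_refl: "psim p p"
  by (cases p) (simp add: psim_iff)

lemma psim_sym: "psim p q \<Longrightarrow> psim q p"
  by (cases p; cases q) (auto simp: psim_iff)

lemma psim_scaleR_left:
  assumes "t > 0" "psim (x, xs) q"
  shows "psim (x, t *\<^sub>R xs) q"
proof (cases q)
  case (Pair y ys)
  have "(t *\<^sub>R xs) (y - x) < 0 \<longleftrightarrow> xs (y - x) < 0" "(t *\<^sub>R xs) (y - x) = 0 \<longleftrightarrow> xs (y - x) = 0"
    using assms(1) by (auto simp: scaleR_blinfun.rep_eq mult_less_0_iff)
  then show ?thesis using assms(2) Pair by (simp add: psim_iff)
qed

lemma psim_scaleR_right: "t > 0 \<Longrightarrow> psim p (y, ys) \<Longrightarrow> psim p (y, t *\<^sub>R ys)"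
  by (meson psim_scaleR_left psim_sym)

lemma pseudomonotone_iff_psim: "pseudomonotone T \<longleftrightarrow> (\<forall>p\<in>T. \<forall>q\<in>T. psim p q)"
  unfolding pseudomonotone_def by (fastforce simp: psim_iff_pseudomonotone_pair)

lemma pseudomonotone_psim: "pseudomonotone T \<Longrightarrow> p \<in> T \<Longrightarrow> q \<in> T \<Longrightarrow> psim p q"
  unfolding pseudomonotone_iff_psim by blast

lemma pseudomonotone_subset: "pseudomonotone T \<Longrightarrow> S \<subseteq> T \<Longrightarrow> pseudomonotone S"
  unfolding pseudomonotone_def by blast

lemma pseudomonotone_insert:
  assumes "pseudomonotone S" "\<forall>q\<in>S. psim p q"
  shows "pseudomonotone (insert p S)"
  using assms psim_refl psim_sym unfolding pseudomonotone_iff_psim by blast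

lemma mem_pm_polar_D: "(x, xs) \<in> pm_polar_D T \<longleftrightarrow> (\<forall>q\<in>T. psim (x, xs) q) \<and> x \<in> opdom T"
  unfolding pm_polar_D_def pm_polar_def by auto

lemma pm_polar_antimono: "S \<subseteq> T \<Longrightarrow> pm_polar T \<subseteq> pm_polar S"
  unfolding pm_polar_def by blast

lemma pm_polar_scaleR: "(x, xs) \<in> pm_polar T \<Longrightarrow> t > 0 \<Longrightarrow> (x, t *\<^sub>R xs) \<in> pm_polar T"
  unfolding pm_polar_def using psim_scaleR_left by blast

lemma pseudomonotone_subset_pm_polar: "pseudomonotone T \<Longrightarrow> T \<subseteq> pm_polar T"
  unfolding pm_polar_def using pseudomonotone_psim by blast

lemma pseudomonotone_subset_pm_polar_D: "pseudomonotone T \<Longrightarrow> T \<subseteq> pm_polar_D T"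
  using pseudomonotone_subset_pm_polar by (fastforce simp: pm_polar_D_def mem_opdom)

lemma opdom_pm_polar_D: "pseudomonotone T \<Longrightarrow> opdom (pm_polar_D T) = opdom T"
  using pseudomonotone_subset_pm_polar_D by (fastforce simp: mem_opdom pm_polar_D_def)

lemma pseudomonotone_pm_polar_D: "pseudomonotone (pm_polar T) \<Longrightarrow> pseudomonotone (pm_polar_D T)"
  by (auto intro: pseudomonotone_subset simp: pm_polar_D_def)

lemma pm_polar_D_pm_polar_D:
  assumes "pre_maximal_pm T"
  shows "pm_polar_D (pm_polar_D T) = pm_polar_D T"
proof
  have pmT: "pseudomonotone T" and pmP: "pseudomonotone (pm_polar T)"
    using assms by (auto simp: pre_maximal_pm_def)
  have "pm_polar (pm_polar_D T) \<subseteq> pm_polar T"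
    by (rule pm_polar_antimono[OF pseudomonotone_subset_pm_polar_D[OF pmT]])
  then show "pm_polar_D (pm_polar_D T) \<subseteq> pm_polar_D T"
    using opdom_pm_polar_D[OF pmT] by (auto simp: pm_polar_D_def)
  show "pm_polar_D T \<subseteq> pm_polar_D (pm_polar_D T)"
    by (rule pseudomonotone_subset_pm_polar_D[OF pseudomonotone_pm_polar_D[OF pmP]])
qed

lemma no_pm_extension_same_opdom_iff:
  assumes "pseudomonotone S"
  shows "\<not> (\<exists>S'. pseudomonotone S' \<and> S \<subset> S' \<and> opdom S' = opdom S) \<longleftrightarrow> pm_polar_D S = S"
proof
  assume no_ext: "\<not> (\<exists>S'. pseudomonotone S' \<and> S \<subset> S' \<and> opdom S' = opdom S)"
  have "p \<in> S" if "p \<in> pm_polar_D S" for p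
  proof (rule ccontr)
    obtain x xs where p: "p = (x, xs)" by (cases p)
    assume "p \<notin> S"
    moreover have "pseudomonotone (insert p S)"
      using pseudomonotone_insert[OF assms] that p by (simp add: mem_pm_polar_D)
    moreover have "opdom (insert p S) = opdom S"
      using that p by (auto simp: mem_pm_polar_D mem_opdom)
    ultimately show False using no_ext by blast
  qed
  then show "pm_polar_D S = S" using pseudomonotone_subset_pm_polar_D[OF assms] by blast
next
  assume fixed: "pm_polar_D S = S"
  show "\<not> (\<exists>S'. pseudomonotone S' \<and> S \<subset> S' \<and> opdom S' = opdom S)"
  proof
    assume "\<exists>S'. pseudomonotone S' \<and> S \<subset> S' \<and> opdom S' = opdom S"
    then obtain S' x xs where "pseudomonotone S'" "S \<subseteq> S'" "opdom S' = opdom S"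
      and new: "(x, xs) \<in> S'" "(x, xs) \<notin> S" by auto
    then have "(x, xs) \<in> pm_polar_D S"
      using pseudomonotone_psim by (fastforce simp: mem_pm_polar_D mem_opdom)
    with fixed new show False by simp
  qed
qed

lemma D_maximal_pm_iff:
  "D_maximal_pm T \<longleftrightarrow>
     pseudomonotone T \<and> (\<exists>S. pseudomonotone S \<and> op_equiv T S \<and> pm_polar_D S = S)"
  unfolding D_maximal_pm_def using no_pm_extension_same_opdom_iff by blast

lemma op_equiv_dcone_pos:
  assumes "op_equiv T S" "x \<in> opdom T - zeros T"
  shows "dcone_pos (opval T x) = dcone_pos (opval S x)"
proof -
  have "zeros S = zeros T" "dcone (opval T x) = dcone (opval S x)"
    using assms unfolding op_equiv_def by auto
  moreover have "0 \<notin> opval T x" "0 \<notin> opval S x"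
    using assms(2) calculation(1) by (auto simp: mem_zeros)
  ultimately show ?thesis by (simp add: dcone_pos_eq_dcone_minus_zero)
qed

lemma op_equiv_scaled_value:
  assumes "op_equiv T S" "x \<notin> zeros T" "(x, xs) \<in> S"
  obtains t v where "t > 0" "(x, v) \<in> T" "xs = t *\<^sub>R v"
proof -
  have "x \<in> opdom T" using assms unfolding op_equiv_def by (auto simp: mem_opdom)
  moreover have "xs \<in> dcone_pos (opval S x)" using assms(3) by (simp add: mem_dcone_pos_self)
  ultimately have "xs \<in> dcone_pos (opval T x)"
    using op_equiv_dcone_pos[OF assms(1)] assms(2) by simp
  then show ?thesis using that by (auto simp: mem_dcone_pos)
qed

lemma op_equiv_sym: "op_equiv T S \<Longrightarrow> op_equiv S T"
  unfolding op_equiv_def by auto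

lemma op_equiv_subset_pm_polar:
  assumes pmT: "pseudomonotone T" and pmS: "pseudomonotone S" and equiv: "op_equiv T S"
  shows "S \<subseteq> pm_polar T"
proof -
  have zeros: "zeros S = zeros T" using equiv by (simp add: op_equiv_def)
  have "psim (y, ys) (z, zs)" if yS: "(y, ys) \<in> S" and zT: "(z, zs) \<in> T" for y ys z zs
  proof (cases "z \<in> zeros T")
    case False
    then have "z \<notin> zeros S" using zeros by simp
    then obtain t w where "t > 0" "(z, w) \<in> S" "zs = t *\<^sub>R w"
      by (rule op_equiv_scaled_value[OF op_equiv_sym[OF equiv] _ zT])
    then show ?thesis using psim_scaleR_right pseudomonotone_psim[OF pmS] yS by blast
  next
    case z_zero: True
    show ?thesis
    proof (cases "y \<in> zeros T")
      case False
      then obtain t u where "t > 0" "(y, u) \<in> T" "ys = t *\<^sub>R u"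
        by (rule op_equiv_scaled_value[OF equiv _ yS])
      then show ?thesis using psim_scaleR_left pseudomonotone_psim[OF pmT] zT by blast
    next
      case True
      then have "(y, 0) \<in> T" "(z, 0) \<in> S" using z_zero zeros by (auto simp: mem_zeros)
      then have "psim (y, 0) (z, zs)" "psim (y, ys) (z, 0)"
        using pseudomonotone_psim pmT pmS zT yS by blast+
      then show ?thesis by (auto simp: psim_iff)
    qed
  qed
  then show ?thesis unfolding pm_polar_def by auto
qed

lemma pm_polar_D_eq_if_op_equiv_fixed:
  assumes "pre_maximal_pm T" "pseudomonotone S" "op_equiv T S" "pm_polar_D S = S"
  shows "pm_polar_D T = S"
proof
  have pmT: "pseudomonotone T" and pmP: "pseudomonotone (pm_polar T)"
    using assms(1) by (auto simp: pre_maximal_pm_def)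
  have S_polar: "S \<subseteq> pm_polar T" using op_equiv_subset_pm_polar[OF pmT assms(2,3)] .
  have dom: "opdom S = opdom T" using assms(3) by (simp add: op_equiv_def)
  show "S \<subseteq> pm_polar_D T" using S_polar dom by (auto simp: pm_polar_D_def mem_opdom)
  have "pm_polar_D T \<subseteq> pm_polar_D S"
  proof clarify
    fix x xs assume "(x, xs) \<in> pm_polar_D T"
    then have "(x, xs) \<in> pm_polar T" "x \<in> opdom S" using dom by (auto simp: pm_polar_D_def)
    then show "(x, xs) \<in> pm_polar_D S"
      unfolding mem_pm_polar_D using S_polar pseudomonotone_psim[OF pmP] by blast
  qed
  then show "pm_polar_D T \<subseteq> S" using assms(4) by simp
qed

lemma mem_That_zero: "x \<in> zeros T \<Longrightarrow> (x, xs) \<in> That T \<longleftrightarrow> xs \<in> normal_cone (Lset T x) x"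
  unfolding That_def by simp

lemma mem_That_nonzero:
  "x \<notin> zeros T \<Longrightarrow> (x, xs) \<in> That T \<longleftrightarrow> x \<in> opdom T \<and> xs \<in> dcone_pos (opval T x)"
  unfolding That_def by simp

text \<open>At a zero \<open>x\<close> of \<open>T\<close> every \<open>(y, y\<^sup>*) \<in> T\<close> has \<open>\<langle>x - y, y\<^sup>*\<rangle> \<le> 0\<close>, so \<open>L(T,x)\<close> collects the
points where equality holds, and \<open>\<sim>\<^sub>p\<close> reduces to the normal cone inequality there.\<close>

lemma mem_pm_polar_D_zero_iff:
  assumes pmT: "pseudomonotone T" and x: "x \<in> zeros T"
  shows "(x, xs) \<in> pm_polar_D T \<longleftrightarrow> xs \<in> normal_cone (Lset T x) x"
proof -
  have "(x, 0) \<in> T" using x by (simp add: mem_zeros)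
  then have nonpos: "ys (x - y) \<le> 0" if "(y, ys) \<in> T" for y ys
    using pmT that unfolding pseudomonotone_def by (fastforce simp: blinfun.diff_right)
  have pair: "psim (x, xs) (y, ys) \<longleftrightarrow> (ys (x - y) \<ge> 0 \<longrightarrow> xs (y - x) \<le> 0)"
    if "(y, ys) \<in> T" for y ys
    using nonpos[OF that] unfolding psim_iff by auto
  show ?thesis
  proof
    assume "(x, xs) \<in> pm_polar_D T"
    then show "xs \<in> normal_cone (Lset T x) x"
      using pair by (auto simp: mem_pm_polar_D normal_cone_def Lset_def)
  next
    assume "xs \<in> normal_cone (Lset T x) x"
    then show "(x, xs) \<in> pm_polar_D T"
      using pair x zeros_subset_opdom
      by (fastforce simp: mem_pm_polar_D normal_cone_def Lset_def)
  qed
qed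

lemma That_subset_pm_polar_D:
  assumes pmT: "pseudomonotone T"
  shows "That T \<subseteq> pm_polar_D T"
proof (clarify)
  fix x xs assume H: "(x, xs) \<in> That T"
  show "(x, xs) \<in> pm_polar_D T"
  proof (cases "x \<in> zeros T")
    case True
    then show ?thesis using H mem_That_zero mem_pm_polar_D_zero_iff[OF pmT] by blast
  next
    case False
    then obtain t v where "t > 0" "(x, v) \<in> T" "xs = t *\<^sub>R v"
      using H by (auto simp: mem_That_nonzero mem_dcone_pos)
    then show ?thesis
      using pseudomonotone_subset_pm_polar[OF pmT] pm_polar_scaleR
      by (fastforce simp: pm_polar_D_def mem_opdom)
  qed
qed

lemma subset_That_if_op_equiv:
  assumes pmT: "pseudomonotone T" and equiv: "op_equiv T S" and S: "S \<subseteq> pm_polar_D T"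
  shows "S \<subseteq> That T"
proof (clarify)
  fix x xs assume xS: "(x, xs) \<in> S"
  have dom: "x \<in> opdom T" using xS equiv by (auto simp: op_equiv_def mem_opdom)
  show "(x, xs) \<in> That T"
  proof (cases "x \<in> zeros T")
    case True
    then show ?thesis using xS S mem_That_zero mem_pm_polar_D_zero_iff[OF pmT] by blast
  next
    case False
    then show ?thesis
      using op_equiv_dcone_pos[OF equiv] dom xS mem_dcone_pos_self[of xs "opval S x"]
      by (auto simp: mem_That_nonzero)
  qed
qed

lemma op_equiv_That: "op_equiv T (That T)"
proof -
  have nonzero: "opval (That T) x = dcone_pos (opval T x)" if "x \<in> opdom T - zeros T" for x
    using that by (auto simp: mem_That_nonzero)
  have "(x, 0) \<in> That T" if "x \<in> zeros T" for x
    using that by (simp add: mem_That_zero normal_cone_def)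
  moreover have "(x, 0) \<notin> That T" if "x \<notin> zeros T" for x
    using that by (auto simp: mem_That_nonzero mem_dcone_pos mem_zeros)
  ultimately have zeros: "zeros (That T) = zeros T"
    unfolding set_eq_iff mem_zeros[of _ "That T"] by blast
  have "opdom (That T) = opdom T"
  proof (intro set_eqI iffI)
    fix x assume "x \<in> opdom (That T)"
    then show "x \<in> opdom T"
      using zeros_subset_opdom by (fastforce simp: mem_opdom That_def)
  next
    fix x assume x: "x \<in> opdom T"
    show "x \<in> opdom (That T)"
    proof (cases "x \<in> zeros T")
      case True
      then show ?thesis using zeros zeros_subset_opdom by blast
    next
      case False
      obtain v where "(x, v) \<in> T" using x by (auto simp: mem_opdom)
      then have "(x, v) \<in> That T"
        using False mem_dcone_pos_self[of v "opval T x"] by (auto simp: mem_That_nonzero mem_opdom)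
      then show ?thesis by (auto simp: mem_opdom)
    qed
  qed
  moreover have "dcone (opval T x) = dcone (opval (That T) x)" if "x \<in> opdom T - zeros T" for x
    using that nonzero by (simp add: dcone_dcone_pos)
  ultimately show ?thesis unfolding op_equiv_def using zeros by simp
qed

theorem mainTheorem16:
  fixes T :: "('a::banach \<times> ('a \<Rightarrow>\<^sub>L real)) set"
  assumes "pre_maximal_pm T"
  shows "D_maximal_pm T \<longleftrightarrow> That T = pm_polar_D T"
proof -
  have pmT: "pseudomonotone T" and pmP: "pseudomonotone (pm_polar T)"
    using assms by (auto simp: pre_maximal_pm_def)
  have "That T = pm_polar_D T" if Dmax: "D_maximal_pm T"
  proof -
    obtain S where "pseudomonotone S" "op_equiv T S" "pm_polar_D S = S"
      using Dmax by (auto simp: D_maximal_pm_iff)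
    then have S: "pm_polar_D T = S" "op_equiv T S"
      using pm_polar_D_eq_if_op_equiv_fixed[OF assms] by auto
    show ?thesis
      using That_subset_pm_polar_D[OF pmT] subset_That_if_op_equiv[OF pmT S(2)] S(1) by auto
  qed
  moreover have "D_maximal_pm T" if "That T = pm_polar_D T"
    using that op_equiv_That[of T] pseudomonotone_pm_polar_D[OF pmP] pm_polar_D_pm_polar_D[OF assms]
      pmT
    by (auto simp: D_maximal_pm_iff)
  ultimately show ?thesis by blast
qed

end
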